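(* For every positive integer $k$, every horizontal alternation of length $2k^4$ contains a monotone horizontal alternation of length at least $2k$.
   Context: A permutation $\pi$ contains $\sigma$ if $\pi$ has a subsequence in the same relative order as $\sigma$. A permutation $\pi$ is a horizontal alternation if there are no indices $i<j$ with $\pi_i$ odd and $\pi_j$ even (all even entries precede all odd entries). A monotone horizontal alternation is a horizontal alternation whose subsequence of odd entries and whose subsequence of even entries are each monotone (increasing or decreasing). *)

theory Defs
  imports Main "HOL-Library.Sublist"
begin

definition is_perm :: "nat list \<Rightarrow> bool" where
  "is_perm xs \<longleftrightarrow> distinct xs \<and> set xs = {1..length xs}"

definition order_iso :: "nat list \<Rightarrow> nat list \<Rightarrow> bool" where
  "order_iso xs ys \<longleftrightarrow> length xs = length ys \<and>
     (\<forall>i<length xs. \<forall>j<length xs. (xs ! i < xs ! j) \<longleftrightarrow> (ys ! i < ys ! j))"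

definition contains :: "nat list \<Rightarrow> nat list \<Rightarrow> bool" where
  "contains pi sigma \<longleftrightarrow> (\<exists>ys. subseq ys pi \<and> order_iso ys sigma)"

definition horiz_alt :: "nat list \<Rightarrow> bool" where
  "horiz_alt pi \<longleftrightarrow> is_perm pi \<and>
     \<not> (\<exists>i j. i < j \<and> j < length pi \<and> odd (pi ! i) \<and> even (pi ! j))"

definition monotone_seq :: "nat list \<Rightarrow> bool" where
  "monotone_seq xs \<longleftrightarrow> sorted_wrt (<) xs \<or> sorted_wrt (>) xs"

definition monotone_horiz_alt :: "nat list \<Rightarrow> bool" where
  "monotone_horiz_alt pi \<longleftrightarrow> horiz_alt pi \<and>
     monotone_seq (filter odd pi) \<and> monotone_seq (filter even pi)"

end

theory Submission
  imports Defs "HOL-Library.FuncSet"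
begin

text \<open>Group the values \<open>1..2N\<close> (\<open>N = k\<^sup>4\<close>) into the pairs \<open>{2v - 1, 2v}\<close>. In a horizontal alternation
  the even entries come first and the odd ones last, and reading either part through \<open>v\<close> gives a
  permutation of \<open>1..N\<close>. By Erdos--Szekeres the even part is monotone on some \<open>k\<^sup>2\<close> pairs, and among
  those the odd part is monotone on some \<open>k\<close> pairs. The entries of \<open>\<pi>\<close> lying in these \<open>k\<close> pairs form
  a monotone horizontal alternation of length \<open>2k\<close>.\<close>

definition inc_chains_to :: "('a::linorder \<Rightarrow> 'b::ord) \<Rightarrow> 'a set \<Rightarrow> 'a \<Rightarrow> 'a set set" where
  "inc_chains_to f I i = {J. J \<subseteq> I \<and> i \<in> J \<and> (\<forall>x\<in>J. x \<le> i) \<and> strict_mono_on J f}"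

definition longest_inc_chain_to :: "('a::linorder \<Rightarrow> 'b::ord) \<Rightarrow> 'a set \<Rightarrow> 'a \<Rightarrow> nat" where
  "longest_inc_chain_to f I i = Max (card ` inc_chains_to f I i)"

lemma finite_inc_chains_to: "finite I \<Longrightarrow> finite (inc_chains_to f I i)"
  by (rule finite_subset[of _ "Pow I"]) (auto simp: inc_chains_to_def)

lemma card_le_longest_inc_chain_to:
  "finite I \<Longrightarrow> J \<in> inc_chains_to f I i \<Longrightarrow> card J \<le> longest_inc_chain_to f I i"
  unfolding longest_inc_chain_to_def by (simp add: finite_inc_chains_to)

lemma longest_inc_chain_to_attained:
  assumes "finite I" "i \<in> I"
  obtains J where "J \<in> inc_chains_to f I i" "card J = longest_inc_chain_to f I i"
proof -
  have "{i} \<in> inc_chains_to f I i"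
    using assms(2) by (simp add: inc_chains_to_def monotone_on_def)
  then have "longest_inc_chain_to f I i \<in> card ` inc_chains_to f I i"
    unfolding longest_inc_chain_to_def using assms(1)
    by (intro Max_in) (auto simp: finite_inc_chains_to)
  then show ?thesis using that by (metis imageE)
qed

lemma longest_inc_chain_to_less:
  fixes f :: "'a::linorder \<Rightarrow> 'b::order"
  assumes "finite I" "a \<in> I" "b \<in> I" "a < b" "f a < f b"
  shows "longest_inc_chain_to f I a < longest_inc_chain_to f I b"
proof -
  obtain J where J: "J \<in> inc_chains_to f I a" "card J = longest_inc_chain_to f I a"
    using longest_inc_chain_to_attained assms(1,2) by blast
  then have JI: "J \<subseteq> I" and "a \<in> J" and below: "\<forall>x\<in>J. x \<le> a" and mono: "strict_mono_on J f"
    by (auto simp: inc_chains_to_def)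
  have "strict_mono_on (insert b J) f"
  proof (rule monotone_onI)
    fix x y assume "x \<in> insert b J" "y \<in> insert b J" "x < y"
    then consider "x \<in> J" "y \<in> J" | "x \<in> J" "y = b"
      using below \<open>a < b\<close> by fastforce
    then show "f x < f y"
    proof cases
      case 2
      then have "f x \<le> f a"
        using mono below \<open>a \<in> J\<close> by (metis order_le_less monotone_onD)
      then show ?thesis using \<open>f a < f b\<close> 2 by simp
    qed (use mono \<open>x < y\<close> in \<open>simp add: monotone_onD\<close>)
  qed
  then have "insert b J \<in> inc_chains_to f I b"
    using JI below assms(3,4) by (auto simp: inc_chains_to_def)
  then have "card (insert b J) \<le> longest_inc_chain_to f I b"
    by (rule card_le_longest_inc_chain_to[OF assms(1)])
  moreover have "b \<notin> J" "finite J"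
    using below assms(4) JI assms(1) finite_subset by fastforce+
  ultimately show ?thesis using J(2) by simp
qed

text \<open>If no increasing chain has \<open>n\<close> elements, the length of the longest increasing chain ending
  at a point takes fewer than \<open>n\<close> values, and \<open>f\<close> is decreasing on each of its level sets.\<close>
theorem erdos_szekeres:
  fixes f :: "'a::linorder \<Rightarrow> 'b::linorder"
  assumes "finite I" "inj_on f I" "n * n \<le> card I"
  shows "\<exists>J\<subseteq>I. card J = n \<and> (strict_mono_on J f \<or> strict_antimono_on J f)"
proof (cases "\<exists>i\<in>I. n \<le> longest_inc_chain_to f I i")
  case True
  then obtain i J where "J \<in> inc_chains_to f I i" "n \<le> card J"
    using longest_inc_chain_to_attained[OF assms(1)] by metis
  moreover obtain T where "T \<subseteq> J" "card T = n"
    using obtain_subset_with_card_n calculation(2) by metis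
  ultimately show ?thesis
    by (intro exI[of _ T]) (auto simp: inc_chains_to_def intro: monotone_on_subset)
next
  case False
  show ?thesis
  proof (cases "n = 0")
    case True
    then show ?thesis by (intro exI[of _ "{}"]) simp
  next
    case n: False
    let ?L = "longest_inc_chain_to f I"
    have "?L \<in> I \<rightarrow> {..<n}" using False by auto
    then obtain v where "card (?L -` {v} \<inter> I) * n \<ge> card I"
      using pigeonhole_card[of ?L I "{..<n}"] assms(1) n by auto
    then have "n \<le> card (?L -` {v} \<inter> I)"
      using assms(3) n by (meson le_trans mult_le_cancel2 not_gr0)
    then obtain T where T: "T \<subseteq> ?L -` {v} \<inter> I" "card T = n"
      using obtain_subset_with_card_n by metis
    have "strict_antimono_on T f"
    proof (rule monotone_onI)
      fix a b assume ab: "a \<in> T" "b \<in> T" "a < b"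
      then have "?L a = ?L b" using T(1) by auto
      then have "\<not> f a < f b"
        using longest_inc_chain_to_less[OF assms(1), of a b f] ab T(1) by auto
      moreover have "f a \<noteq> f b"
        using ab T(1) assms(2) \<open>a < b\<close> by (auto dest: inj_onD)
      ultimately show "f b < f a" by simp
    qed
    then show ?thesis using T by auto
  qed
qed

lemma sorted_wrt_filter_nth:
  assumes "\<And>i j. i < j \<Longrightarrow> j < length xs \<Longrightarrow> P (xs ! i) \<Longrightarrow> P (xs ! j) \<Longrightarrow> R (xs ! i) (xs ! j)"
  shows "sorted_wrt R (filter P xs)"
proof -
  have "sorted_wrt (\<lambda>x y. P x \<longrightarrow> P y \<longrightarrow> R x y) xs"
    using assms by (auto simp: sorted_wrt_iff_nth_less)
  then have "sorted_wrt (\<lambda>x y. P x \<longrightarrow> P y \<longrightarrow> R x y) (filter P xs)"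
    by (rule sorted_wrt_filter)
  then show ?thesis by (rule sorted_wrt_mono_rel[rotated]) auto
qed

lemma monotone_seq_filter: "monotone_seq xs \<Longrightarrow> monotone_seq (filter P xs)"
  by (auto simp: monotone_seq_def intro: sorted_wrt_filter)

lemma monotone_seq_map_iff:
  assumes "strict_mono_on (set xs) f"
  shows "monotone_seq (map f xs) \<longleftrightarrow> monotone_seq xs"
proof -
  have "f x < f y \<longleftrightarrow> x < y" if "x \<in> set xs" "y \<in> set xs" for x y
    using strict_mono_on_less[OF assms that] .
  then show ?thesis
    unfolding monotone_seq_def sorted_wrt_map
    by (metis (no_types, lifting) sorted_wrt_mono_rel)
qed

theorem erdos_szekeres_filter:
  fixes xs :: "nat list"
  assumes "distinct xs" "I \<subseteq> set xs" "n * n \<le> card I"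
  shows "\<exists>J\<subseteq>I. card J = n \<and> monotone_seq (filter (\<lambda>x. x \<in> J) xs)"
proof -
  define I' where "I' = {i. i < length xs \<and> xs ! i \<in> I}"
  have inj: "inj_on ((!) xs) {..<length xs}"
    using assms(1) by (simp add: inj_on_nth)
  have "(!) xs ` I' = I"
    using assms(2) by (force simp: I'_def in_set_conv_nth)
  moreover have "inj_on ((!) xs) I'"
    using inj by (rule inj_on_subset) (auto simp: I'_def)
  ultimately have "card I' = card I" by (metis card_image)
  then obtain J' where J': "J' \<subseteq> I'" "card J' = n"
      and mono: "strict_mono_on J' ((!) xs) \<or> strict_antimono_on J' ((!) xs)"
    using erdos_szekeres[of I' "(!) xs" n] \<open>inj_on ((!) xs) I'\<close> assms(3)
    by (auto simp: I'_def)
  define J where "J = (!) xs ` J'"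
  have J'_iff: "xs ! i \<in> J \<longleftrightarrow> i \<in> J'" if "i < length xs" for i
    using that J'(1) inj by (auto simp: J_def I'_def dest: inj_onD)
  have "card J = n"
    unfolding J_def using J' \<open>inj_on ((!) xs) I'\<close> by (metis card_image inj_on_subset)
  moreover have "J \<subseteq> I"
    using J'(1) by (auto simp: J_def I'_def)
  moreover have "monotone_seq (filter (\<lambda>x. x \<in> J) xs)"
    using mono unfolding monotone_seq_def
    by (auto intro!: sorted_wrt_filter_nth simp: J'_iff monotone_on_def)
  ultimately show ?thesis by blast
qed

lemma horiz_alt_iff_sorted_wrt:
  "horiz_alt xs \<longleftrightarrow> is_perm xs \<and> sorted_wrt (\<lambda>x y. odd x \<longrightarrow> odd y) xs"
  by (auto simp: horiz_alt_def sorted_wrt_iff_nth_less)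

lemma contains_map:
  assumes "subseq ys xs" "strict_mono_on (set ys) f"
  shows "contains xs (map f ys)"
proof -
  have "order_iso ys (map f ys)"
    using strict_mono_on_less[OF assms(2)] by (auto simp: order_iso_def)
  then show ?thesis using assms(1) by (auto simp: contains_def)
qed

lemma monotone_horiz_alt_map:
  assumes "distinct ys" "f ` set ys = {1..length ys}" "strict_mono_on (set ys) f"
    and parity: "\<And>x. x \<in> set ys \<Longrightarrow> even (f x) \<longleftrightarrow> even x"
    and "sorted_wrt (\<lambda>x y. odd x \<longrightarrow> odd y) ys"
    and "monotone_seq (filter even ys)" "monotone_seq (filter odd ys)"
  shows "monotone_horiz_alt (map f ys)"
proof -
  have "is_perm (map f ys)"
    using assms(1-3) by (simp add: is_perm_def distinct_map strict_mono_on_imp_inj_on)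
  moreover have "sorted_wrt (\<lambda>x y. odd x \<longrightarrow> odd y) (map f ys)"
    using assms(5) unfolding sorted_wrt_map by (rule sorted_wrt_mono_rel[rotated]) (simp add: parity)
  moreover have "filter P (map f ys) = map f (filter P ys)" if "P = even \<or> P = odd" for P
    using that by (auto simp: filter_map o_def parity cong: filter_cong)
  moreover have "strict_mono_on (set (filter P ys)) f" for P
    using assms(3) by (rule monotone_on_subset) auto
  ultimately show ?thesis
    using assms(6,7) by (simp add: monotone_horiz_alt_def horiz_alt_iff_sorted_wrt monotone_seq_map_iff)
qed

definition ceil_half :: "nat \<Rightarrow> nat" where
  "ceil_half x = (x + 1) div 2"

lemma strict_mono_on_ceil_half: "strict_mono_on {x. even x = b} ceil_half"
proof (rule monotone_onI)
  fix x y :: nat assume "x \<in> {x. even x = b}" "y \<in> {x. even x = b}" "x < y"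
  then have "even x \<longleftrightarrow> even y" "x < y" by simp_all
  then have "x + 2 \<le> y" by presburger
  then have "(x + 2 + 1) div 2 \<le> (y + 1) div 2" by (simp add: div_le_mono)
  then show "ceil_half x < ceil_half y" by (simp add: ceil_half_def)
qed

definition rank :: "nat set \<Rightarrow> nat \<Rightarrow> nat" where
  "rank S v = card {w \<in> S. w \<le> v}"

lemma strict_mono_on_rank:
  assumes "finite S"
  shows "strict_mono_on S (rank S)"
proof (rule monotone_onI)
  fix v w assume "v \<in> S" "w \<in> S" "v < w"
  then have "{u \<in> S. u \<le> v} \<subseteq> {u \<in> S. u \<le> w}" "w \<in> {u \<in> S. u \<le> w} - {u \<in> S. u \<le> v}"
    by auto
  then have "{u \<in> S. u \<le> v} \<subset> {u \<in> S. u \<le> w}" by blast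
  then show "rank S v < rank S w"
    unfolding rank_def using assms by (simp add: psubset_card_mono)
qed

lemma rank_image:
  assumes "finite S"
  shows "rank S ` S = {1..card S}"
proof (rule card_subset_eq)
  show "rank S ` S \<subseteq> {1..card S}"
    using assms by (force simp: rank_def Suc_le_eq card_gt_0_iff intro: card_mono)
  show "card (rank S ` S) = card {1..card S}"
    using strict_mono_on_imp_inj_on[OF strict_mono_on_rank[OF assms]] by (simp add: card_image)
qed simp

lemma rank_ge_1: "finite S \<Longrightarrow> v \<in> S \<Longrightarrow> 1 \<le> rank S v"
  using rank_image by fastforce

lemma map_ceil_half_filter_parity:
  assumes "is_perm pi" "length pi = 2 * N"
  shows "distinct (map ceil_half (filter (\<lambda>x. even x = b) pi))"
    and "set (map ceil_half (filter (\<lambda>x. even x = b) pi)) = {1..N}"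
proof -
  have "inj_on ceil_half (set (filter (\<lambda>x. even x = b) pi))"
    using strict_mono_on_imp_inj_on[OF strict_mono_on_ceil_half] by (rule inj_on_subset) auto
  then show "distinct (map ceil_half (filter (\<lambda>x. even x = b) pi))"
    using assms(1) by (simp add: is_perm_def distinct_map)
  have "v \<in> ceil_half ` {x \<in> {1..2 * N}. even x = b}" if "v \<in> {1..N}" for v
  proof
    show "v = ceil_half (if b then 2 * v else 2 * v - 1)"
      using that by (auto simp: ceil_half_def)
  qed (use that in auto)
  moreover have "ceil_half x \<in> {1..N}" if "x \<in> {1..2 * N}" for x
    using that by (auto simp: ceil_half_def)
  ultimately show "set (map ceil_half (filter (\<lambda>x. even x = b) pi)) = {1..N}"
    using assms by (auto simp: is_perm_def)
qed

text \<open>The two values \<open>2v - 1, 2v\<close> of a pair \<open>v \<in> S\<close> are sent to \<open>2r - 1, 2r\<close>, where \<open>r\<close> is the rank of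
  \<open>v\<close> in \<open>S\<close>.\<close>
definition pair_rank :: "nat set \<Rightarrow> nat \<Rightarrow> nat" where
  "pair_rank S x = 2 * rank S (ceil_half x) - x mod 2"

lemma even_pair_rank_iff:
  "finite S \<Longrightarrow> ceil_half x \<in> S \<Longrightarrow> even (pair_rank S x) \<longleftrightarrow> even x"
  using rank_ge_1[of S "ceil_half x"] by (cases "even x") (auto simp: pair_rank_def)

lemma strict_mono_on_pair_rank:
  assumes "finite S"
  shows "strict_mono_on {x. 0 < x \<and> ceil_half x \<in> S} (pair_rank S)"
proof (rule monotone_onI)
  fix x y assume x: "x \<in> {x. 0 < x \<and> ceil_half x \<in> S}" and y: "y \<in> {x. 0 < x \<and> ceil_half x \<in> S}"
    and "x < y"
  let ?a = "rank S (ceil_half x)" and ?b = "rank S (ceil_half y)"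
  have "1 \<le> ?a" using rank_ge_1 assms x by simp
  have "?a < ?b \<or> (?a = ?b \<and> odd x \<and> even y)"
  proof (cases "ceil_half x < ceil_half y")
    case True
    then show ?thesis
      using monotone_onD[OF strict_mono_on_rank[OF assms]] x y by simp
  next
    case False
    then have "ceil_half x = ceil_half y"
      using \<open>x < y\<close> by (simp add: ceil_half_def div_le_mono)
    then have "odd x \<and> even y"
      using \<open>x < y\<close> unfolding ceil_half_def by presburger
    then show ?thesis using \<open>ceil_half x = ceil_half y\<close> by simp
  qed
  moreover have "x mod 2 \<le> 1" "y mod 2 \<le> 1" by simp_all
  ultimately show "pair_rank S x < pair_rank S y"
    using \<open>1 \<le> ?a\<close> by (auto simp: pair_rank_def odd_iff_mod_2_eq_one)
qed

lemma pair_rank_image: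
  assumes "finite S" "0 \<notin> S"
  shows "pair_rank S ` {x. 0 < x \<and> ceil_half x \<in> S} = {1..2 * card S}"
proof
  show "pair_rank S ` {x. 0 < x \<and> ceil_half x \<in> S} \<subseteq> {1..2 * card S}"
  proof (rule image_subsetI)
    fix x assume "x \<in> {x. 0 < x \<and> ceil_half x \<in> S}"
    then have "rank S (ceil_half x) \<in> {1..card S}"
      using rank_image[OF assms(1)] by blast
    moreover have "x mod 2 \<le> 1" by simp
    ultimately show "pair_rank S x \<in> {1..2 * card S}"
      by (auto simp: pair_rank_def)
  qed
  show "{1..2 * card S} \<subseteq> pair_rank S ` {x. 0 < x \<and> ceil_half x \<in> S}"
  proof
    fix m assume m: "m \<in> {1..2 * card S}"
    then have "ceil_half m \<in> rank S ` S"
      using rank_image[OF assms(1)] by (auto simp: ceil_half_def)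
    then obtain v where v: "v \<in> S" "rank S v = ceil_half m" by auto
    then have "v \<noteq> 0" using assms(2) by metis
    define x where "x = 2 * v - m mod 2"
    have "ceil_half x = v" "x mod 2 = m mod 2" "0 < x"
      using \<open>v \<noteq> 0\<close> unfolding x_def ceil_half_def
      by (cases "even m"; cases v; simp add: odd_iff_mod_2_eq_one)+
    moreover have "2 * ceil_half m - m mod 2 = m"
      by (cases "even m") (auto simp: ceil_half_def odd_iff_mod_2_eq_one)
    ultimately have "pair_rank S x = m"
      using v(2) by (simp add: pair_rank_def)
    then show "m \<in> pair_rank S ` {x. 0 < x \<and> ceil_half x \<in> S}"
      using \<open>ceil_half x = v\<close> \<open>0 < x\<close> v(1) by auto
  qed
qed

lemma contains_monotone_horiz_alt_of_pairs:
  assumes "horiz_alt pi" "length pi = 2 * N" "S \<subseteq> {1..N}"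
    and "monotone_seq (filter (\<lambda>v. v \<in> S) (map ceil_half (filter even pi)))"
    and "monotone_seq (filter (\<lambda>v. v \<in> S) (map ceil_half (filter odd pi)))"
  shows "\<exists>sigma. monotone_horiz_alt sigma \<and> length sigma = 2 * card S \<and> contains pi sigma"
proof -
  define ys where "ys = filter (\<lambda>x. ceil_half x \<in> S) pi"
  have perm: "is_perm pi" and horiz: "sorted_wrt (\<lambda>x y. odd x \<longrightarrow> odd y) pi"
    using assms(1) by (simp_all add: horiz_alt_iff_sorted_wrt)
  have "finite S" "0 \<notin> S" using assms(3) finite_subset by auto
  have "x \<le> 2 * N" if "ceil_half x \<in> S" for x
  proof -
    have "(x + 1) div 2 \<le> N" using that assms(3) by (auto simp: ceil_half_def)
    then show ?thesis by presburger
  qed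
  then have set_ys: "set ys = {x. 0 < x \<and> ceil_half x \<in> S}"
    using perm assms(2) by (auto simp: ys_def is_perm_def)
  have "distinct ys" using perm by (simp add: ys_def is_perm_def)
  have mono: "strict_mono_on (set ys) (pair_rank S)"
    unfolding set_ys using \<open>finite S\<close> by (rule strict_mono_on_pair_rank)
  have "length ys = card (pair_rank S ` set ys)"
    using \<open>distinct ys\<close> strict_mono_on_imp_inj_on[OF mono] by (simp add: card_image distinct_card)
  then have len: "length ys = 2 * card S"
    unfolding set_ys using pair_rank_image[OF \<open>finite S\<close> \<open>0 \<notin> S\<close>] by simp
  have halves: "monotone_seq (filter (\<lambda>x. even x = b) ys)" if
    "monotone_seq (filter (\<lambda>v. v \<in> S) (map ceil_half (filter (\<lambda>x. even x = b) pi)))" for b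
  proof -
    have "strict_mono_on (set (filter (\<lambda>x. even x = b) ys)) ceil_half"
      by (rule monotone_on_subset[OF strict_mono_on_ceil_half]) auto
    moreover have "map ceil_half (filter (\<lambda>x. even x = b) ys)
        = filter (\<lambda>v. v \<in> S) (map ceil_half (filter (\<lambda>x. even x = b) pi))"
      by (simp add: ys_def filter_map filter_filter o_def conj_commute)
    ultimately show ?thesis using that by (simp add: monotone_seq_map_iff[symmetric])
  qed
  have "monotone_horiz_alt (map (pair_rank S) ys)"
  proof (rule monotone_horiz_alt_map[OF \<open>distinct ys\<close> _ mono])
    show "pair_rank S ` set ys = {1..length ys}"
      unfolding set_ys len by (rule pair_rank_image[OF \<open>finite S\<close> \<open>0 \<notin> S\<close>])
    show "even (pair_rank S x) \<longleftrightarrow> even x" if "x \<in> set ys" for x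
      using that \<open>finite S\<close> by (simp add: set_ys even_pair_rank_iff)
    show "sorted_wrt (\<lambda>x y. odd x \<longrightarrow> odd y) ys"
      unfolding ys_def using horiz by (rule sorted_wrt_filter)
    show "monotone_seq (filter even ys)" "monotone_seq (filter odd ys)"
      using halves[of True] halves[of False] assms(4,5) by simp_all
  qed
  moreover have "contains pi (map (pair_rank S) ys)"
    using contains_map[OF _ mono] by (simp add: ys_def)
  ultimately show ?thesis using len by auto
qed

theorem mainTheorem10:
  fixes k :: nat and pi :: "nat list"
  assumes "k > 0" and "horiz_alt pi" and "length pi = 2 * k ^ 4"
  shows "\<exists>sigma. monotone_horiz_alt sigma \<and> length sigma \<ge> 2 * k \<and> contains pi sigma"
proof -
  define N where "N = k ^ 2 * k ^ 2"
  have len: "length pi = 2 * N" using assms(3) by (simp add: N_def flip: power_add)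
  have perm: "is_perm pi" using assms(2) by (simp add: horiz_alt_def)
  define evens where "evens = map ceil_half (filter even pi)"
  define odds where "odds = map ceil_half (filter odd pi)"
  have "distinct evens" "set evens = {1..N}" "distinct odds" "set odds = {1..N}"
    using map_ceil_half_filter_parity[OF perm len, of True] map_ceil_half_filter_parity[OF perm len, of False]
    by (simp_all add: evens_def odds_def)
  then obtain J where J: "J \<subseteq> {1..N}" "card J = k ^ 2"
      and mono_J: "monotone_seq (filter (\<lambda>v. v \<in> J) evens)"
    using erdos_szekeres_filter[of evens "{1..N}" "k ^ 2"] by (auto simp: N_def)
  have J_odds: "J \<subseteq> set (filter (\<lambda>v. v \<in> J) odds)"
    using J(1) \<open>set odds = {1..N}\<close> by auto
  obtain S where S: "S \<subseteq> J" "card S = k"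
      and mono_S: "monotone_seq (filter (\<lambda>v. v \<in> S) (filter (\<lambda>v. v \<in> J) odds))"
    using erdos_szekeres_filter[OF distinct_filter[OF \<open>distinct odds\<close>] J_odds, of k] J(2)
    by (auto simp: power2_eq_square)
  have restrict: "filter (\<lambda>v. v \<in> S) (filter (\<lambda>v. v \<in> J) xs) = filter (\<lambda>v. v \<in> S) xs" for xs
    using S(1) by (auto simp: filter_filter intro: filter_cong)
  have "monotone_seq (filter (\<lambda>v. v \<in> S) evens)" "monotone_seq (filter (\<lambda>v. v \<in> S) odds)"
    using monotone_seq_filter[OF mono_J, of "\<lambda>v. v \<in> S"] mono_S by (simp_all only: restrict)
  then obtain sigma where "monotone_horiz_alt sigma" "length sigma = 2 * card S" "contains pi sigma"
    using contains_monotone_horiz_alt_of_pairs[OF assms(2) len, of S] S(1) J(1)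
    unfolding evens_def odds_def by blast
  then show ?thesis using S(2) by auto
qed

end
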